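(* Let $f:2^N\to\mathbb R$ be monotone with $f(\emptyset)\ge0$, and let $\mathcal D$ be a product distribution on $2^N$ with bounded marginals. Let $p$ be a polynomial and $\epsilon\ge f(N)/p(n)$. Then, given a sufficiently large polynomial number of samples $(S_j,f(S_j))$ with $S_j$ i.i.d. from $\mathcal D$, with probability at least $1-O(e^{-n})$ the estimates $\hat v_i$ satisfy, for all $e_i\in N$, $\big|\hat v_i-\mathbb E_{S\sim\mathcal D\mid e_i\notin S}[f_S(e_i)]\big|\le\epsilon$.
   Context: $N=\{e_1,\dots,e_n\}$, $f_S(e)=f(S\cup\{e\})-f(S)$. A product distribution includes each element independently; bounded marginals means for every $e$, $\Pr[e\in S]$ and $\Pr[e\notin S]$ ($S\sim\mathcal D$) lie between $1/\mathrm{poly}(n)$ and $1-1/\mathrm{poly}(n)$. For each $i$, $\mathcal S_i$ (resp. $\mathcal S_{-i}$) is the collection of samples containing (resp. not containing) $e_i$, and $\hat v_i=\frac{1}{|\mathcal S_i|}\sum_{S\in\mathcal S_i}f(S)-\frac{1}{|\mathcal S_{-i}|}\sum_{S\in\mathcal S_{-i}}f(S)$. *)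

theory Defs
  imports "HOL-Probability.Probability" "HOL-Computational_Algebra.Polynomial"
begin

text \<open>Ground set N = {0..<n}; element e_i is the index i.\<close>

definition prod_dist :: "nat \<Rightarrow> (nat \<Rightarrow> real) \<Rightarrow> nat set pmf" where
  "prod_dist n \<pi> = map_pmf (\<lambda>x. {i\<in>{..<n}. x i}) (Pi_pmf {..<n} False (\<lambda>i. bernoulli_pmf (\<pi> i)))"

definition samples :: "nat \<Rightarrow> 'a set pmf \<Rightarrow> (nat \<Rightarrow> 'a set) pmf" where
  "samples k D = Pi_pmf {..<k} {} (\<lambda>_. D)"

definition vhat :: "('a set \<Rightarrow> real) \<Rightarrow> nat \<Rightarrow> (nat \<Rightarrow> 'a set) \<Rightarrow> 'a \<Rightarrow> real" where
  "vhat f k Ss i =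
     (let Si = {j\<in>{..<k}. i \<in> Ss j}; Sni = {j\<in>{..<k}. i \<notin> Ss j} in
      (\<Sum>j\<in>Si. f (Ss j)) / real (card Si) - (\<Sum>j\<in>Sni. f (Ss j)) / real (card Sni))"

definition cond_marg :: "('a set \<Rightarrow> real) \<Rightarrow> 'a set pmf \<Rightarrow> 'a \<Rightarrow> real" where
  "cond_marg f D i =
     measure_pmf.expectation (cond_pmf D {S. i \<notin> S}) (\<lambda>S. f (insert i S) - f S)"

end

theory Submission
  imports Defs
begin

text \<open>
  Split the estimate as \<open>\<hat>v\<^sub>i = x\<^sub>1 / y - x\<^sub>0 / (1 - y)\<close>, where \<open>y\<close> is the empirical
  frequency of \<open>e\<^sub>i\<close> and \<open>x\<^sub>1\<close>, \<open>x\<^sub>0\<close> are the empirical means of \<open>f(S)\<close> restricted to samples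
  with and without \<open>e\<^sub>i\<close>. By independence of the coordinates, their expectations are
  \<open>\<pi>\<^sub>i\<close>, \<open>\<pi>\<^sub>i U\<close> and \<open>(1 - \<pi>\<^sub>i) V\<close>, where \<open>U\<close> and \<open>V\<close> are the means of \<open>f(S \<union> {e\<^sub>i})\<close> and
  \<open>f(S)\<close> over the product distribution on \<open>N - {e\<^sub>i}\<close>, and the target conditional marginal
  is \<open>U - V\<close>. Hoeffding's inequality makes all \<open>3n\<close> empirical means accurate to \<open>t\<close> (resp.
  \<open>t f(N)\<close>) outside an event of probability \<open>6 n exp(-2 k t\<^sup>2)\<close>; since \<open>\<pi>\<^sub>i\<close> and \<open>1 - \<pi>\<^sub>i\<close> are at
  least \<open>1/q(n)\<close>, the two ratios are then accurate to \<open>O(t f(N) q(n))\<close>. Choosing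
  \<open>t \<approx> 1/(p(n) q(n))\<close> and \<open>k \<approx> n p(n)\<^sup>2 q(n)\<^sup>2\<close> gives the claim.
\<close>

lemma monotone_set_fun_bounds:
  fixes f :: "'a set \<Rightarrow> real"
  assumes "\<forall>A B. A \<subseteq> B \<and> B \<subseteq> N \<longrightarrow> f A \<le> f B" "f {} \<ge> 0" "S \<subseteq> N"
  shows "0 \<le> f S \<and> f S \<le> f N"
  using assms(1)[rule_format, of "{}" S] assms(1)[rule_format, of S N] assms(2,3) by auto

lemma expectation_pmf_in_range:
  fixes g :: "'a \<Rightarrow> real"
  assumes "finite (set_pmf P)" "\<forall>x\<in>set_pmf P. g x \<in> {lo..hi}"
  shows "measure_pmf.expectation P g \<in> {lo..hi}"
  using assms
  by (auto intro!: measure_pmf.integral_ge_const measure_pmf.integral_le_const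
      integrable_measure_pmf_finite simp: AE_measure_pmf_iff)

lemma expectation_cond_pmf:
  fixes h :: "'a \<Rightarrow> real"
  assumes fin: "finite (set_pmf D)" and ne: "set_pmf D \<inter> B \<noteq> {}"
  shows "measure_pmf.expectation (cond_pmf D B) h =
         measure_pmf.expectation D (\<lambda>x. indicator B x * h x) / measure_pmf.prob D B"
proof -
  have "measure_pmf.expectation (cond_pmf D B) h = (\<Sum>a\<in>set_pmf D. pmf (cond_pmf D B) a *\<^sub>R h a)"
    by (rule integral_measure_pmf[OF fin]) (use ne in auto)
  also have "\<dots> = (\<Sum>a\<in>set_pmf D. pmf D a *\<^sub>R (indicator B a * h a)) / measure_pmf.prob D B"
    by (simp add: pmf_cond[OF ne] sum_divide_distrib indicator_def, intro sum.cong refl, auto)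
  also have "(\<Sum>a\<in>set_pmf D. pmf D a *\<^sub>R (indicator B a * h a)) =
      measure_pmf.expectation D (\<lambda>x. indicator B x * h x)"
    by (rule integral_measure_pmf[OF fin, symmetric]) auto
  finally show ?thesis .
qed

lemma set_pmf_samples_component:
  assumes "Ss \<in> set_pmf (samples k D)" "j < k"
  shows "Ss j \<in> set_pmf D"
  using assms set_Pi_pmf_subset'[of "{..<k}" "{}" "\<lambda>_. D"]
  by (auto simp: samples_def PiE_dflt_def)

lemma map_pmf_samples_component: "j < k \<Longrightarrow> map_pmf (\<lambda>Ss. Ss j) (samples k D) = D"
  by (simp add: samples_def Pi_pmf_component)

definition empirical_mean :: "nat \<Rightarrow> (nat \<Rightarrow> 'a) \<Rightarrow> ('a \<Rightarrow> real) \<Rightarrow> real" where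
  "empirical_mean k Ss g = (\<Sum>j<k. g (Ss j)) / real k"

lemma hoeffding_samples:
  fixes D :: "'a set pmf" and g :: "'a set \<Rightarrow> real"
  assumes k: "k > 0" and lohi: "lo < hi" and range: "\<forall>S\<in>set_pmf D. g S \<in> {lo..hi}"
    and \<delta>: "\<delta> \<ge> 0"
  shows "measure_pmf.prob (samples k D)
           {Ss. \<delta> \<le> \<bar>empirical_mean k Ss g - measure_pmf.expectation D g\<bar>}
         \<le> 2 * exp (-2 * real k * \<delta>\<^sup>2 / (hi - lo)\<^sup>2)"
proof -
  have distr: "distr (samples k D) borel (\<lambda>Ss. g (Ss j)) = distr D borel g" if "j < k" for j
  proof -
    have "distr (samples k D) borel (\<lambda>Ss. g (Ss j)) =
          distr (map_pmf (\<lambda>Ss. Ss j) (samples k D)) borel g"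
      unfolding map_pmf_rep_eq by (subst distr_distr) (auto simp: o_def)
    then show ?thesis using map_pmf_samples_component[of j k D] that by simp
  qed
  interpret H: Hoeffding_ineq_iid "samples k D" "{..<k}" "\<lambda>j Ss. g (Ss j)"
     "\<lambda>Ss. g (Ss 0)" lo hi "measure_pmf.expectation D g"
  proof unfold_locales
    show "prob_space.indep_vars (samples k D) (\<lambda>_. borel) (\<lambda>j Ss. g (Ss j)) {..<k}"
      unfolding samples_def
      by (intro prob_space.indep_vars_compose2[OF _ indep_vars_Pi_pmf])
         (auto simp: measure_pmf.prob_space_axioms)
    show "distr (samples k D) borel (\<lambda>Ss. g (Ss j)) = distr (samples k D) borel (\<lambda>Ss. g (Ss 0))"
      if "j \<in> {..<k}" for j
      using distr[of j] distr[of 0] that k by simp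
    show "AE Ss in samples k D. g (Ss 0) \<in> {lo..hi}"
      using range set_pmf_samples_component[of _ k D 0] k by (auto simp: AE_measure_pmf_iff)
    show "measure_pmf.expectation D g \<equiv> measure_pmf.expectation (samples k D) (\<lambda>Ss. g (Ss 0))"
      using map_pmf_samples_component[of 0 k D] k
      by (simp flip: integral_map_pmf[of "\<lambda>Ss. Ss 0"])
  qed auto
  show ?thesis
    using H.Hoeffding_ineq_abs_ge'[OF \<delta> lohi] k
    by (simp add: empirical_mean_def lessThan_empty_iff)
qed

text \<open>Unlike Hoeffding's inequality, this allows \<open>lo = hi\<close>, so that \<open>f(N) = 0\<close> needs no
  separate treatment.\<close>

lemma empirical_mean_deviation_prob:
  fixes D :: "'a set pmf" and g :: "'a set \<Rightarrow> real"
  assumes k: "k > 0" and lohi: "lo \<le> hi" and range: "\<forall>S\<in>set_pmf D. g S \<in> {lo..hi}"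
    and t: "t > 0"
  shows "measure_pmf.prob (samples k D)
           {Ss. t * (hi - lo) < \<bar>empirical_mean k Ss g - measure_pmf.expectation D g\<bar>}
         \<le> 2 * exp (-2 * real k * t\<^sup>2)"
proof (cases "lo = hi")
  case True
  have "measure_pmf.expectation D g = measure_pmf.expectation D (\<lambda>_. lo)"
    using range True by (intro integral_cong_AE) (auto simp: AE_measure_pmf_iff)
  moreover have "empirical_mean k Ss g = lo" if "Ss \<in> set_pmf (samples k D)" for Ss
    using range True set_pmf_samples_component[OF that] k by (simp add: empirical_mean_def)
  ultimately have "set_pmf (samples k D) \<inter>
      {Ss. t * (hi - lo) < \<bar>empirical_mean k Ss g - measure_pmf.expectation D g\<bar>} = {}"
    using True by auto
  then have "measure_pmf.prob (samples k D)
      {Ss. t * (hi - lo) < \<bar>empirical_mean k Ss g - measure_pmf.expectation D g\<bar>} = 0"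
    by (simp add: measure_pmf_zero_iff)
  then show ?thesis by simp
next
  case False
  then have "lo < hi" using lohi by simp
  have "measure_pmf.prob (samples k D)
          {Ss. t * (hi - lo) < \<bar>empirical_mean k Ss g - measure_pmf.expectation D g\<bar>}
        \<le> measure_pmf.prob (samples k D)
          {Ss. t * (hi - lo) \<le> \<bar>empirical_mean k Ss g - measure_pmf.expectation D g\<bar>}"
    by (intro measure_pmf.finite_measure_mono) auto
  also have "\<dots> \<le> 2 * exp (-2 * real k * (t * (hi - lo))\<^sup>2 / (hi - lo)\<^sup>2)"
    using t \<open>lo < hi\<close> by (intro hoeffding_samples[OF k _ range]) auto
  also have "\<dots> = 2 * exp (-2 * real k * t\<^sup>2)"
    using \<open>lo < hi\<close> by (simp add: power_mult_distrib)
  finally show ?thesis .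
qed

definition prod_dist_minus :: "nat \<Rightarrow> (nat \<Rightarrow> real) \<Rightarrow> nat \<Rightarrow> nat set pmf" where
  "prod_dist_minus n \<pi> i = map_pmf (\<lambda>x. {j\<in>{..<n}. j \<noteq> i \<and> x j})
     (Pi_pmf ({..<n} - {i}) False (\<lambda>j. bernoulli_pmf (\<pi> j)))"

lemma set_pmf_prod_dist: "set_pmf (prod_dist n \<pi>) \<subseteq> Pow {..<n}"
  unfolding prod_dist_def by auto

lemma set_pmf_prod_dist_minus: "set_pmf (prod_dist_minus n \<pi> i) \<subseteq> Pow ({..<n} - {i})"
  unfolding prod_dist_minus_def by auto

lemma finite_set_pmf_prod_dist_minus: "finite (set_pmf (prod_dist_minus n \<pi> i))"
  by (rule finite_subset[OF set_pmf_prod_dist_minus]) simp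

lemma prod_dist_decompose:
  assumes "i < n"
  shows "prod_dist n \<pi> = bind_pmf (bernoulli_pmf (\<pi> i))
           (\<lambda>b. map_pmf (if b then insert i else id) (prod_dist_minus n \<pi> i))"
proof -
  let ?A = "{..<n} - {i}"
  let ?p = "\<lambda>j. bernoulli_pmf (\<pi> j)"
  have "prod_dist n \<pi> = map_pmf (\<lambda>x. {j\<in>{..<n}. x j}) (Pi_pmf (insert i ?A) False ?p)"
    unfolding prod_dist_def using assms by (simp add: insert_absorb)
  also have "\<dots> = map_pmf (\<lambda>x. {j\<in>{..<n}. x j})
      (bind_pmf (?p i) (\<lambda>b. map_pmf (\<lambda>x. x(i := b)) (Pi_pmf ?A False ?p)))"
    by (subst Pi_pmf_insert') (auto simp: map_pmf_def)
  also have "\<dots> = bind_pmf (?p i)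
      (\<lambda>b. map_pmf (\<lambda>x. {j\<in>{..<n}. (x(i := b)) j}) (Pi_pmf ?A False ?p))"
    by (simp add: map_bind_pmf pmf.map_comp o_def)
  also have "\<dots> = bind_pmf (?p i)
      (\<lambda>b. map_pmf (if b then insert i else id) (prod_dist_minus n \<pi> i))"
    unfolding prod_dist_minus_def pmf.map_comp
    by (intro bind_pmf_cong refl pmf.map_cong) (use assms in auto)
  finally show ?thesis .
qed

lemma expectation_prod_dist:
  fixes \<phi> :: "nat set \<Rightarrow> real"
  assumes "i < n" "0 \<le> \<pi> i" "\<pi> i \<le> 1"
  shows "measure_pmf.expectation (prod_dist n \<pi>) \<phi> =
           \<pi> i * measure_pmf.expectation (prod_dist_minus n \<pi> i) (\<lambda>S. \<phi> (insert i S))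
         + (1 - \<pi> i) * measure_pmf.expectation (prod_dist_minus n \<pi> i) \<phi>"
  using assms finite_set_pmf_prod_dist_minus[of n \<pi> i]
  by (subst prod_dist_decompose[OF assms(1)], subst pmf_expectation_bind[where A = UNIV])
     (auto simp: UNIV_bool)

context
  fixes n :: nat and \<pi> :: "nat \<Rightarrow> real" and i :: nat
  assumes i: "i < n" and \<pi>i: "0 < \<pi> i" "\<pi> i < 1"
begin

private lemma expectation_prod_dist_minus_cong:
  fixes \<phi> \<psi> :: "nat set \<Rightarrow> real"
  assumes "\<And>S. i \<notin> S \<Longrightarrow> \<phi> S = \<psi> S"
  shows "measure_pmf.expectation (prod_dist_minus n \<pi> i) \<phi> =
         measure_pmf.expectation (prod_dist_minus n \<pi> i) \<psi>"
  using assms set_pmf_prod_dist_minus[of n \<pi> i]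
  by (intro integral_cong_AE) (auto simp: AE_measure_pmf_iff)

lemma expectation_prod_dist_indicator: "measure_pmf.expectation (prod_dist n \<pi>) (\<lambda>S. of_bool (i \<in> S)) = \<pi> i"
  using expectation_prod_dist[OF i] \<pi>i expectation_prod_dist_minus_cong[of "\<lambda>S. of_bool (i \<in> S)" "\<lambda>_. 0"]
  by simp

lemma expectation_prod_dist_mem_mult:
  "measure_pmf.expectation (prod_dist n \<pi>) (\<lambda>S. of_bool (i \<in> S) * f S) =
   \<pi> i * measure_pmf.expectation (prod_dist_minus n \<pi> i) (\<lambda>S. f (insert i S))"
  using expectation_prod_dist[OF i] \<pi>i
    expectation_prod_dist_minus_cong[of "\<lambda>S. of_bool (i \<in> S) * f S" "\<lambda>_. 0"]
  by simp

lemma expectation_prod_dist_not_mem_mult: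
  "measure_pmf.expectation (prod_dist n \<pi>) (\<lambda>S. of_bool (i \<notin> S) * f S) =
   (1 - \<pi> i) * measure_pmf.expectation (prod_dist_minus n \<pi> i) f"
  using expectation_prod_dist[OF i] \<pi>i
    expectation_prod_dist_minus_cong[of "\<lambda>S. of_bool (i \<notin> S) * f S" f]
  by simp

lemma cond_marg_prod_dist:
  "cond_marg f (prod_dist n \<pi>) i =
     measure_pmf.expectation (prod_dist_minus n \<pi> i) (\<lambda>S. f (insert i S))
   - measure_pmf.expectation (prod_dist_minus n \<pi> i) f"
proof -
  let ?D = "prod_dist n \<pi>" and ?R = "prod_dist_minus n \<pi> i" and ?B = "{S. i \<notin> S}"
  have "indicator ?B = (\<lambda>S. of_bool (i \<notin> S) * (1::real))"
    by (auto simp: indicator_def)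
  moreover have "measure_pmf.prob ?D ?B = measure_pmf.expectation ?D (indicator ?B)"
    by simp
  ultimately have "measure_pmf.prob ?D ?B = measure_pmf.expectation ?D (\<lambda>S. of_bool (i \<notin> S) * 1)"
    by simp
  also have "\<dots> = 1 - \<pi> i"
    using expectation_prod_dist_not_mem_mult[of "\<lambda>_. 1"] by simp
  finally have prob: "measure_pmf.prob ?D ?B = 1 - \<pi> i" .
  then have "set_pmf ?D \<inter> ?B \<noteq> {}"
    using \<pi>i measure_pmf_zero_iff[of ?D ?B] by auto
  moreover have "finite (set_pmf ?D)"
    by (rule finite_subset[OF set_pmf_prod_dist]) simp
  ultimately have "cond_marg f ?D i =
      measure_pmf.expectation ?D (\<lambda>S. of_bool (i \<notin> S) * (f (insert i S) - f S)) / (1 - \<pi> i)"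
    unfolding cond_marg_def using prob by (simp add: expectation_cond_pmf indicator_def of_bool_def)
  also have "\<dots> = measure_pmf.expectation ?R (\<lambda>S. f (insert i S) - f S)"
    using expectation_prod_dist_not_mem_mult[of "\<lambda>S. f (insert i S) - f S"] \<pi>i by simp
  also have "\<dots> = measure_pmf.expectation ?R (\<lambda>S. f (insert i S)) - measure_pmf.expectation ?R f"
    by (intro Bochner_Integration.integral_diff integrable_measure_pmf_finite
        finite_set_pmf_prod_dist_minus)
  finally show ?thesis .
qed

end

lemma vhat_eq_empirical_ratios:
  assumes "k > 0"
  shows "vhat f k Ss i =
      empirical_mean k Ss (\<lambda>S. of_bool (i \<in> S) * f S) / empirical_mean k Ss (\<lambda>S. of_bool (i \<in> S))
    - empirical_mean k Ss (\<lambda>S. of_bool (i \<notin> S) * f S) / (1 - empirical_mean k Ss (\<lambda>S. of_bool (i \<in> S)))"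
proof -
  have sum_filter: "(\<Sum>j\<in>{j\<in>{..<k}. P j}. h j) = (\<Sum>j<k. of_bool (P j) * h j)"
    for P and h :: "nat \<Rightarrow> real"
  proof -
    have "(\<Sum>j<k. of_bool (P j) * h j) = (\<Sum>j<k. if P j then h j else 0)"
      by (intro sum.cong) auto
    then show ?thesis by (simp only: sum.inter_filter[OF finite_lessThan])
  qed
  have "real (card {j\<in>{..<k}. i \<in> Ss j}) = (\<Sum>j\<in>{j\<in>{..<k}. i \<in> Ss j}. 1)"
    by simp
  also have "\<dots> = (\<Sum>j<k. of_bool (i \<in> Ss j) * 1)"
    by (rule sum_filter)
  finally have card_mem: "real (card {j\<in>{..<k}. i \<in> Ss j}) = (\<Sum>j<k. of_bool (i \<in> Ss j))"
    by simp
  have "real (card {j\<in>{..<k}. i \<notin> Ss j}) = (\<Sum>j\<in>{j\<in>{..<k}. i \<notin> Ss j}. 1)"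
    by simp
  also have "\<dots> = (\<Sum>j<k. of_bool (i \<notin> Ss j) * 1)"
    by (rule sum_filter)
  also have "\<dots> = (\<Sum>j<k. 1 - of_bool (i \<in> Ss j))"
    by (intro sum.cong) auto
  also have "\<dots> = real k - (\<Sum>j<k. of_bool (i \<in> Ss j))"
    by (simp add: sum_subtractf)
  finally have card_not_mem: "real (card {j\<in>{..<k}. i \<notin> Ss j}) = real k - (\<Sum>j<k. of_bool (i \<in> Ss j))" .
  have "1 - (\<Sum>j<k. of_bool (i \<in> Ss j)) / real k = (real k - (\<Sum>j<k. of_bool (i \<in> Ss j))) / real k"
    using assms by (simp add: field_simps)
  then show ?thesis
    unfolding vhat_def Let_def empirical_mean_def card_mem card_not_mem sum_filter
    using assms by simp
qed

lemma ratio_approx: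
  fixes a y x W M t :: real
  assumes "\<bar>y - a\<bar> \<le> t" "t \<le> a / 2" "0 < t" "0 \<le> W" "W \<le> M" "\<bar>x - a * W\<bar> \<le> t * M"
  shows "\<bar>x / y - W\<bar> \<le> 4 * t * M / a"
proof -
  have a: "a > 0" and y: "y \<ge> a / 2" using assms by linarith+
  have "\<bar>a * W - y * W\<bar> = \<bar>a - y\<bar> * W" using assms by (simp add: abs_mult left_diff_distrib[symmetric])
  also have "\<dots> \<le> t * M" using assms by (intro mult_mono) auto
  finally have "\<bar>x - y * W\<bar> \<le> 2 * t * M" using assms(6) by linarith
  moreover have "\<bar>x / y - W\<bar> = \<bar>x - y * W\<bar> / y" using y a by (simp add: field_simps)
  ultimately have "\<bar>x / y - W\<bar> \<le> 2 * t * M / y" using y a by (simp add: divide_right_mono)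
  also have "\<dots> \<le> 2 * t * M / (a / 2)"
    using y a assms by (intro divide_left_mono) auto
  finally show ?thesis by simp
qed

lemma ratio_difference_approx:
  fixes a y u v U V M t Q :: real
  assumes "1 / Q \<le> a" "a \<le> 1 - 1 / Q" "0 < t" "t \<le> 1 / (2 * Q)"
    "0 \<le> U" "U \<le> M" "0 \<le> V" "V \<le> M"
    "\<bar>y - a\<bar> \<le> t" "\<bar>u - a * U\<bar> \<le> t * M" "\<bar>v - (1 - a) * V\<bar> \<le> t * M"
  shows "\<bar>u / y - v / (1 - y) - (U - V)\<bar> \<le> 8 * t * M * Q"
proof -
  have "0 < 1 / (2 * Q)" using assms(3,4) by linarith
  then have Q: "Q > 0" by simp
  have "1 / Q \<le> 1 - a" using assms(2) by simp
  then have a: "1 \<le> a * Q" "1 \<le> (1 - a) * Q"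
    using assms(1) Q by (simp_all add: pos_divide_le_eq)
  have t: "t \<le> a / 2" "t \<le> (1 - a) / 2"
    using assms(1,2,4) by (simp_all add: field_simps)
  have "\<bar>u / y - U\<bar> \<le> 4 * t * M / a"
    by (rule ratio_approx) (use assms t in auto)
  moreover have "\<bar>v / (1 - y) - V\<bar> \<le> 4 * t * M / (1 - a)"
    by (rule ratio_approx) (use assms t in \<open>auto simp: abs_minus_commute\<close>)
  moreover have "4 * t * M / a \<le> 4 * t * M * Q" "4 * t * M / (1 - a) \<le> 4 * t * M * Q"
  proof -
    have "0 < 1 / Q" using Q by simp
    then have "0 < a" "0 < 1 - a" using assms(1) \<open>1 / Q \<le> 1 - a\<close> by linarith+
    then have "1 / a \<le> Q" "1 / (1 - a) \<le> Q" using a by (simp_all add: divide_le_eq mult.commute)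
    moreover have "0 \<le> 4 * t * M" using assms(3,5,6) by simp
    ultimately show "4 * t * M / a \<le> 4 * t * M * Q" "4 * t * M / (1 - a) \<le> 4 * t * M * Q"
      using mult_left_mono by fastforce+
  qed
  ultimately show ?thesis by linarith
qed

lemma vhat_error_le:
  fixes f :: "nat set \<Rightarrow> real"
  assumes mono: "\<forall>A B. A \<subseteq> B \<and> B \<subseteq> {..<n} \<longrightarrow> f A \<le> f B" and f0: "f {} \<ge> 0"
    and i: "i < n" and k: "k > 0" and \<pi>i: "1 / Q \<le> \<pi> i" "\<pi> i \<le> 1 - 1 / Q"
    and t: "0 < t" "t \<le> 1 / (2 * Q)"
  defines "D \<equiv> prod_dist n \<pi>"
  assumes dev_mem: "\<bar>empirical_mean k Ss (\<lambda>S. of_bool (i \<in> S))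
                     - measure_pmf.expectation D (\<lambda>S. of_bool (i \<in> S))\<bar> \<le> t"
    and dev_in: "\<bar>empirical_mean k Ss (\<lambda>S. of_bool (i \<in> S) * f S)
                 - measure_pmf.expectation D (\<lambda>S. of_bool (i \<in> S) * f S)\<bar> \<le> t * f {..<n}"
    and dev_out: "\<bar>empirical_mean k Ss (\<lambda>S. of_bool (i \<notin> S) * f S)
                  - measure_pmf.expectation D (\<lambda>S. of_bool (i \<notin> S) * f S)\<bar> \<le> t * f {..<n}"
  shows "\<bar>vhat f k Ss i - cond_marg f D i\<bar> \<le> 8 * t * f {..<n} * Q"
proof -
  let ?R = "prod_dist_minus n \<pi> i"
  define U where "U = measure_pmf.expectation ?R (\<lambda>S. f (insert i S))"
  define V where "V = measure_pmf.expectation ?R f"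
  have "0 < 1 / (2 * Q)" using t by linarith
  then have "0 < 1 / Q" by simp
  then have \<pi>i': "0 < \<pi> i" "\<pi> i < 1" using \<pi>i by linarith+
  have bounds: "f (insert i S) \<in> {0..f {..<n}} \<and> f S \<in> {0..f {..<n}}" if "S \<in> set_pmf ?R" for S
  proof -
    have "insert i S \<subseteq> {..<n}" "S \<subseteq> {..<n}"
      using set_pmf_prod_dist_minus[of n \<pi> i] i that by auto
    then show ?thesis using monotone_set_fun_bounds[OF mono f0] by simp
  qed
  have W: "U \<in> {0..f {..<n}}" "V \<in> {0..f {..<n}}"
    unfolding U_def V_def using bounds
    by (blast intro: expectation_pmf_in_range[OF finite_set_pmf_prod_dist_minus])+
  note facts = expectation_prod_dist_indicator expectation_prod_dist_mem_mult expectation_prod_dist_not_mem_mult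
    cond_marg_prod_dist
  have means: "measure_pmf.expectation D (\<lambda>S. of_bool (i \<in> S)) = \<pi> i"
    "measure_pmf.expectation D (\<lambda>S. of_bool (i \<in> S) * f S) = \<pi> i * U"
    "measure_pmf.expectation D (\<lambda>S. of_bool (i \<notin> S) * f S) = (1 - \<pi> i) * V"
    and cond: "cond_marg f D i = U - V"
    unfolding D_def U_def V_def using facts[where n = n and \<pi> = \<pi> and i = i, OF i \<pi>i'] by simp_all
  show ?thesis
    unfolding vhat_eq_empirical_ratios[OF k] cond
    by (rule ratio_difference_approx) (use \<pi>i t W dev_mem dev_in dev_out means in auto)
qed

lemma vhat_error_prob:
  fixes f :: "nat set \<Rightarrow> real"
  assumes mono: "\<forall>A B. A \<subseteq> B \<and> B \<subseteq> {..<n} \<longrightarrow> f A \<le> f B" and f0: "f {} \<ge> 0"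
    and k: "k > 0" and \<pi>: "\<forall>i<n. 1 / Q \<le> \<pi> i \<and> \<pi> i \<le> 1 - 1 / Q"
    and t: "0 < t" "t \<le> 1 / (2 * Q)" and \<epsilon>: "8 * t * f {..<n} * Q \<le> \<epsilon>"
  shows "measure_pmf.prob (samples k (prod_dist n \<pi>))
           {Ss. \<exists>i<n. \<bar>vhat f k Ss i - cond_marg f (prod_dist n \<pi>) i\<bar> > \<epsilon>}
         \<le> 6 * real n * exp (-2 * real k * t\<^sup>2)"
proof -
  let ?D = "prod_dist n \<pi>" and ?M = "f {..<n}"
  let ?P = "samples k ?D"
  let ?dev = "\<lambda>g c. {Ss. c < \<bar>empirical_mean k Ss g - measure_pmf.expectation ?D g\<bar>}"
  define bad where "bad i = ?dev (\<lambda>S. of_bool (i \<in> S)) (t * (1 - 0))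
      \<union> ?dev (\<lambda>S. of_bool (i \<in> S) * f S) (t * (?M - 0))
      \<union> ?dev (\<lambda>S. of_bool (i \<notin> S) * f S) (t * (?M - 0))" for i
  have f_range: "0 \<le> f S \<and> f S \<le> ?M" if "S \<in> set_pmf ?D" for S
    using monotone_set_fun_bounds[OF mono f0, of S] set_pmf_prod_dist[of n \<pi>] that by blast
  have "0 \<le> ?M" using monotone_set_fun_bounds[OF mono f0] by blast
  have prob_dev: "measure_pmf.prob ?P (?dev g (t * (hi - lo))) \<le> 2 * exp (-2 * real k * t\<^sup>2)"
    if "lo \<le> hi" "\<forall>S\<in>set_pmf ?D. g S \<in> {lo..hi}" for g lo hi
    using empirical_mean_deviation_prob[OF k that t(1)] .
  have prob_bad: "measure_pmf.prob ?P (bad i) \<le> 6 * exp (-2 * real k * t\<^sup>2)" for i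
  proof -
    have "measure_pmf.prob ?P (bad i) \<le>
          measure_pmf.prob ?P (?dev (\<lambda>S. of_bool (i \<in> S)) (t * (1 - 0))
            \<union> ?dev (\<lambda>S. of_bool (i \<in> S) * f S) (t * (?M - 0)))
        + measure_pmf.prob ?P (?dev (\<lambda>S. of_bool (i \<notin> S) * f S) (t * (?M - 0)))"
      unfolding bad_def by (rule measure_Un_le) simp_all
    also have "\<dots> \<le>
          measure_pmf.prob ?P (?dev (\<lambda>S. of_bool (i \<in> S)) (t * (1 - 0)))
        + measure_pmf.prob ?P (?dev (\<lambda>S. of_bool (i \<in> S) * f S) (t * (?M - 0)))
        + measure_pmf.prob ?P (?dev (\<lambda>S. of_bool (i \<notin> S) * f S) (t * (?M - 0)))"
      by (intro add_mono measure_Un_le) simp_all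
    also have "\<dots> \<le> 2 * exp (-2 * real k * t\<^sup>2) + 2 * exp (-2 * real k * t\<^sup>2)
                   + 2 * exp (-2 * real k * t\<^sup>2)"
      using f_range \<open>0 \<le> ?M\<close> by (intro add_mono prob_dev) auto
    finally show ?thesis by simp
  qed
  have "{Ss. \<exists>i<n. \<bar>vhat f k Ss i - cond_marg f ?D i\<bar> > \<epsilon>} \<subseteq> (\<Union>i<n. bad i)"
  proof clarify
    fix Ss i
    assume "i < n" and "\<bar>vhat f k Ss i - cond_marg f ?D i\<bar> > \<epsilon>"
    then have "\<not> \<bar>vhat f k Ss i - cond_marg f ?D i\<bar> \<le> 8 * t * ?M * Q"
      using \<epsilon> by linarith
    moreover have "\<bar>vhat f k Ss i - cond_marg f ?D i\<bar> \<le> 8 * t * ?M * Q" if "Ss \<notin> bad i"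
      using that \<pi> \<open>i < n\<close> unfolding bad_def
      by (intro vhat_error_le[OF mono f0 \<open>i < n\<close> k _ _ t]) (auto simp: not_less)
    ultimately have "Ss \<in> bad i" by blast
    then show "Ss \<in> (\<Union>i<n. bad i)" using \<open>i < n\<close> by blast
  qed
  then have "measure_pmf.prob ?P {Ss. \<exists>i<n. \<bar>vhat f k Ss i - cond_marg f ?D i\<bar> > \<epsilon>}
      \<le> measure_pmf.prob ?P (\<Union>i<n. bad i)"
    by (intro measure_pmf.finite_measure_mono) auto
  also have "\<dots> \<le> (\<Sum>i<n. measure_pmf.prob ?P (bad i))"
    by (intro measure_pmf.finite_measure_subadditive_finite) auto
  also have "\<dots> \<le> (\<Sum>i<n. 6 * exp (-2 * real k * t\<^sup>2))"
    by (intro sum_mono prob_bad)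
  finally show ?thesis by simp
qed

lemma real_times_exp_minus_double_le: "real n * exp (-2 * real n) \<le> exp (- real n)"
proof -
  have "real n * exp (-2 * real n) \<le> exp (real n) * exp (-2 * real n)"
    using exp_ge_add_one_self[of "real n"] by (intro mult_right_mono) (linarith, simp)
  also have "\<dots> = exp (- real n)" by (simp flip: exp_add)
  finally show ?thesis .
qed

lemma accuracy_parameter_bounds:
  fixes P Q M :: real
  assumes P: "0 < P" and Q: "0 < Q" and M: "0 \<le> M"
  defines "t \<equiv> 1 / (8 * (P + 1) * Q)"
  shows "0 < t" "t \<le> 1 / (2 * Q)" "8 * t * M * Q \<le> M / P" "64 * (P + 1)\<^sup>2 * Q\<^sup>2 * t\<^sup>2 = 1"
proof -
  have t_inv: "t * (8 * (P + 1) * Q) = 1"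
    using P Q by (simp add: t_def)
  have "0 < 2 * Q" "2 * Q \<le> 8 * (P + 1) * Q"
    using P Q by (auto intro: mult_right_mono)
  then show "0 < t" "t \<le> 1 / (2 * Q)"
    unfolding t_def by (auto intro!: divide_left_mono mult_pos_pos)
  have "8 * t * M * Q * (P + 1) = M * (t * (8 * (P + 1) * Q))"
    by (simp add: algebra_simps)
  then have "8 * t * M * Q * (P + 1) = M"
    by (simp only: t_inv mult_1_right)
  then have "8 * t * M * Q = M / (P + 1)"
    using P by (simp add: eq_divide_eq add_pos_pos)
  also have "\<dots> \<le> M / P"
    using P M by (intro divide_left_mono) auto
  finally show "8 * t * M * Q \<le> M / P" .
  have "64 * (P + 1)\<^sup>2 * Q\<^sup>2 * t\<^sup>2 = (t * (8 * (P + 1) * Q))\<^sup>2"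
    by (simp add: power2_eq_square algebra_simps)
  then show "64 * (P + 1)\<^sup>2 * Q\<^sup>2 * t\<^sup>2 = 1"
    by (simp only: t_inv power_one)
qed

lemma vhat_error_prob_sample_size:
  fixes f :: "nat set \<Rightarrow> real"
  assumes mono: "\<forall>A B. A \<subseteq> B \<and> B \<subseteq> {..<n} \<longrightarrow> f A \<le> f B" and f0: "f {} \<ge> 0"
    and \<pi>: "\<forall>i<n. 1 / Q \<le> \<pi> i \<and> \<pi> i \<le> 1 - 1 / Q"
    and P: "0 < P" and Q: "0 < Q" and \<epsilon>: "f {..<n} / P \<le> \<epsilon>"
    and k: "real n * (64 * (P + 1)\<^sup>2 * Q\<^sup>2) \<le> real k"
  shows "measure_pmf.prob (samples k (prod_dist n \<pi>))
           {Ss. \<exists>i<n. \<bar>vhat f k Ss i - cond_marg f (prod_dist n \<pi>) i\<bar> > \<epsilon>}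
         \<le> 6 * exp (- real n)"
proof (cases "n = 0")
  case False
  define t where "t = 1 / (8 * (P + 1) * Q)"
  have "0 \<le> f {..<n}" using monotone_set_fun_bounds[OF mono f0] by blast
  note t = accuracy_parameter_bounds[OF P Q this, folded t_def]
  have "real n = real n * (64 * (P + 1)\<^sup>2 * Q\<^sup>2 * t\<^sup>2)"
    using t(4) by simp
  also have "\<dots> \<le> real k * t\<^sup>2"
    using k by (simp add: mult_right_mono flip: mult.assoc)
  finally have kt: "real n \<le> real k * t\<^sup>2" .
  then have "k > 0" using False by (cases k) auto
  have "measure_pmf.prob (samples k (prod_dist n \<pi>))
      {Ss. \<exists>i<n. \<bar>vhat f k Ss i - cond_marg f (prod_dist n \<pi>) i\<bar> > \<epsilon>}
      \<le> 6 * real n * exp (-2 * real k * t\<^sup>2)"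
    using t(3) \<epsilon> by (intro vhat_error_prob[OF mono f0 \<open>k > 0\<close> \<pi> t(1,2)]) simp
  also have "\<dots> \<le> 6 * (real n * exp (-2 * real n))"
    using kt by (simp add: mult_left_mono)
  also have "\<dots> \<le> 6 * exp (- real n)"
    using real_times_exp_minus_double_le by simp
  finally show ?thesis .
qed simp

theorem lemma5:
  fixes q p :: "real poly"
  assumes "\<forall>n. poly q (real n) > 0"
      and "\<forall>n. poly p (real n) > 0"
  shows "\<exists>m0 :: real poly. \<exists>C :: real.
    \<forall>(n::nat) (f :: nat set \<Rightarrow> real) (\<pi> :: nat \<Rightarrow> real) (\<epsilon>::real) (k::nat).
      (\<forall>A B. A \<subseteq> B \<and> B \<subseteq> {..<n} \<longrightarrow> f A \<le> f B) \<longrightarrow>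
      f {} \<ge> 0 \<longrightarrow>
      (\<forall>i<n. 1 / poly q (real n) \<le> \<pi> i \<and> \<pi> i \<le> 1 - 1 / poly q (real n)) \<longrightarrow>
      \<epsilon> \<ge> f {..<n} / poly p (real n) \<longrightarrow>
      real k \<ge> poly m0 (real n) \<longrightarrow>
      measure_pmf.prob (samples k (prod_dist n \<pi>))
        {Ss. \<exists>i<n. \<bar>vhat f k Ss i - cond_marg f (prod_dist n \<pi>) i\<bar> > \<epsilon>}
      \<le> C * exp (- real n)"
proof (intro exI[of _ "[:0, 64:] * (p + 1)\<^sup>2 * q\<^sup>2"] exI[of _ 6] allI impI)
  fix n f \<pi> \<epsilon> k
  assume "\<forall>A B. A \<subseteq> B \<and> B \<subseteq> {..<n} \<longrightarrow> f A \<le> f B" "f {} \<ge> 0"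
    "\<forall>i<n. 1 / poly q (real n) \<le> \<pi> i \<and> \<pi> i \<le> 1 - 1 / poly q (real n)"
    "\<epsilon> \<ge> f {..<n} / poly p (real n)"
    and k: "real k \<ge> poly ([:0, 64:] * (p + 1)\<^sup>2 * q\<^sup>2) (real n)"
  moreover from k have "real n * (64 * (poly p (real n) + 1)\<^sup>2 * (poly q (real n))\<^sup>2) \<le> real k"
    by (simp add: mult.assoc)
  ultimately show "measure_pmf.prob (samples k (prod_dist n \<pi>))
      {Ss. \<exists>i<n. \<bar>vhat f k Ss i - cond_marg f (prod_dist n \<pi>) i\<bar> > \<epsilon>} \<le> 6 * exp (- real n)"
    using assms by (intro vhat_error_prob_sample_size) auto
qed

end
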